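(* Assume (A1), (A2) and (C4), and let $h_n=n^{-d/(2+d)}$. Then $$\sup_{x\in[0,1]^d}\Big\|\sup_{g\in\mathrm{Lip}(B)}|g_n(x)-g(x)|\Big\|_2=O\big[n^{-\frac{d}{2+d}}\big],$$ where $\|\cdot\|_2$ is the $L^2(\mathbb P)$ norm and $O[\cdot]$ is the usual deterministic big-O as $n\to\infty$.
   Context: Fix an integer $d\ge1$. For $x=(x_1,\dots,x_d)\in\mathbb{R}^d$ let $\|x\|=\max_{1\le k\le d}|x_k|$. Let $(\varepsilon_i)_{i\in\mathbb{Z}^d}$ be a strictly stationary real random field on a probability space $(\Omega,\mathcal F,\mathbb P)$ with $E\varepsilon_0=0$. Strict stationarity means: for all $k\in\mathbb{Z}^d$, $n\ge1$ and $i_1,\dots,i_n\in\mathbb{Z}^d$, the vectors $(\varepsilon_{i_1},\dots,\varepsilon_{i_n})$ and $(\varepsilon_{i_1+k},\dots,\varepsilon_{i_n+k})$ have the same law. For $g:[0,1]^d\to\mathbb{R}$ and $\Lambda_n=\{1,\dots,n\}^d$, set $Y_i=g(i/n)+\varepsilon_i$ for $i\in\Lambda_n$. Let $K$ be a probability density on $\mathbb{R}^d$ and $(h_n)_{n\ge1}$ positive numbers. For $x\in[0,1]^d$ define $$g_n(x)=\frac{\sum_{i\in\Lambda_n}Y_i\,K\big((x-i/n)/h_n\big)}{\sum_{i\in\Lambda_n}K\big((x-i/n)/h_n\big)}.$$ This estimator depends on $g$ through the $Y_i$. Assumption (A1): $K$ is symmetric and nonnegative, and supported in $[-1,1]^d$.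 There is $\eta>0$ with $|K(x)-K(y)|\le\eta\|x-y\|$ for all $x,y\in[-1,1]^d$, and there are constants $c,C>0$ with $c\le K(x)\le C$ for all $x\in[-1,1]^d$. Assumption (A2) / $\mathrm{Lip}(B)$: $B>0$ is fixed and $\mathrm{Lip}(B)$ is the set of $g:[0,1]^d\to\mathbb{R}$ with $|g(x)-g(y)|\le B\|x-y\|$ for all $x,y$. Condition (C4): $\varepsilon_0\in L^2$ and $\sum_{k\in\mathbb{Z}^d}|E(\varepsilon_0\varepsilon_k)|<\infty$. *)

theory Defs
  imports "HOL-Probability.Probability"
begin

definition supnorm :: "real^'d \<Rightarrow> real" where
  "supnorm x = Max (range (\<lambda>k. \<bar>x $ k\<bar>))"

definition unit_cube :: "(real^'d) set" where
  "unit_cube = {x. \<forall>k. 0 \<le> x $ k \<and> x $ k \<le> 1}"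

definition Lambda :: "nat \<Rightarrow> (int^'d) set" where
  "Lambda n = {i. \<forall>k. 1 \<le> i $ k \<and> i $ k \<le> int n}"

definition grid_pt :: "nat \<Rightarrow> int^'d \<Rightarrow> real^'d" where
  "grid_pt n i = (\<chi> k. real_of_int (i $ k) / real n)"

text \<open>Assumption (A1) on the kernel, together with K being a probability density.\<close>
definition kernel_A1 :: "(real^'d \<Rightarrow> real) \<Rightarrow> bool" where
  "kernel_A1 K \<longleftrightarrow>
     K \<in> borel_measurable lborel \<and>
     (\<integral>\<^sup>+ x. ennreal (K x) \<partial>lborel) = 1 \<and>
     (\<forall>x. K (- x) = K x) \<and>
     (\<forall>x. 0 \<le> K x) \<and>
     (\<forall>x. supnorm x > 1 \<longrightarrow> K x = 0) \<and>
     (\<exists>\<eta>>0. \<forall>x y. supnorm x \<le> 1 \<longrightarrow> supnorm y \<le> 1 \<longrightarrow>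
              \<bar>K x - K y\<bar> \<le> \<eta> * supnorm (x - y)) \<and>
     (\<exists>c>0. \<exists>C>0. \<forall>x. supnorm x \<le> 1 \<longrightarrow> c \<le> K x \<and> K x \<le> C)"

text \<open>Lip(B): B-Lipschitz functions on [0,1]^d w.r.t. the max norm
  (only values on the cube are constrained).\<close>
definition Lip :: "real \<Rightarrow> (real^'d \<Rightarrow> real) set" where
  "Lip B = {g. \<forall>x\<in>unit_cube. \<forall>y\<in>unit_cube. \<bar>g x - g y\<bar> \<le> B * supnorm (x - y)}"

definition strictly_stationary ::
    "'a measure \<Rightarrow> (int^'d \<Rightarrow> 'a \<Rightarrow> real) \<Rightarrow> bool" where
  "strictly_stationary M \<epsilon> \<longleftrightarrow>
     (\<forall>k. \<forall>I. finite I \<longrightarrow>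
        distr M (PiM I (\<lambda>_. borel)) (\<lambda>\<omega>. \<lambda>i\<in>I. \<epsilon> (i + k) \<omega>)
      = distr M (PiM I (\<lambda>_. borel)) (\<lambda>\<omega>. \<lambda>i\<in>I. \<epsilon> i \<omega>))"

definition cond_C4 :: "'a measure \<Rightarrow> (int^'d \<Rightarrow> 'a \<Rightarrow> real) \<Rightarrow> bool" where
  "cond_C4 M \<epsilon> \<longleftrightarrow>
     integrable M (\<lambda>\<omega>. (\<epsilon> 0 \<omega>)\<^sup>2) \<and>
     (\<lambda>k. \<bar>integral\<^sup>L M (\<lambda>\<omega>. \<epsilon> 0 \<omega> * \<epsilon> k \<omega>)\<bar>) summable_on UNIV"

text \<open>The Nadaraya-Watson type estimator g_n(x) with Y_i = g(i/n) + eps_i.\<close>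
definition g_est ::
    "(real^'d \<Rightarrow> real) \<Rightarrow> (nat \<Rightarrow> real) \<Rightarrow> (int^'d \<Rightarrow> 'a \<Rightarrow> real) \<Rightarrow>
     (real^'d \<Rightarrow> real) \<Rightarrow> nat \<Rightarrow> real^'d \<Rightarrow> 'a \<Rightarrow> real" where
  "g_est K h \<epsilon> g n x \<omega> =
     (\<Sum>i\<in>Lambda n. (g (grid_pt n i) + \<epsilon> i \<omega>) * K ((1 / h n) *\<^sub>R (x - grid_pt n i)))
     / (\<Sum>i\<in>Lambda n. K ((1 / h n) *\<^sub>R (x - grid_pt n i)))"

end

theory Submission
  imports Defs
begin

text \<open>
  The estimator is a weighted average of the observations, \<open>g\<^sub>n(x) = \<Sum>\<^sub>i w\<^sub>i Y\<^sub>i\<close> with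
  \<open>w\<^sub>i = K((x - i/n)/h) / \<Sum>\<^sub>j K((x - j/n)/h)\<close>. Under (A1) these weights are non-negative, sum
  to one, vanish unless \<open>\<parallel>x - i/n\<parallel> \<le> h\<close>, and are at most \<open>C 2\<^sup>d / (c (nh)\<^sup>d)\<close>, because at least
  \<open>(nh/2)\<^sup>d\<close> grid points lie within distance \<open>h\<close> of \<open>x\<close>. Hence, uniformly in \<open>g \<in> Lip(B)\<close>,
  \<open>|g\<^sub>n(x) - g(x)| \<le> B h + |\<Sum>\<^sub>i w\<^sub>i \<epsilon>\<^sub>i|\<close>, and by stationarity the second moment of the noise
  term is at most \<open>max\<^sub>i w\<^sub>i \<cdot> \<Sum>\<^sub>k |E(\<epsilon>\<^sub>0 \<epsilon>\<^sub>k)| = O(1/(nh)\<^sup>d)\<close>. The bandwidth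
  \<open>h = n powr (-d/(2+d))\<close> makes \<open>1/(nh)\<^sup>d = h\<^sup>2\<close>, so squared bias and variance are both
  \<open>O(h\<^sup>2)\<close> uniformly in \<open>x\<close>.
\<close>

lemma supnorm_le_iff: "supnorm (x::real^'d) \<le> t \<longleftrightarrow> (\<forall>k. \<bar>x $ k\<bar> \<le> t)"
  unfolding supnorm_def by (subst Max_le_iff) auto

lemma vec_Pi_eq_image: "{v::'b^'d. \<forall>k. v $ k \<in> A k} = vec_lambda ` Pi\<^sub>E UNIV A"
proof (intro set_eqI iffI)
  fix v :: "'b^'d" assume "v \<in> {v. \<forall>k. v $ k \<in> A k}"
  then have "vec_nth v \<in> Pi\<^sub>E UNIV A" by auto
  then show "v \<in> vec_lambda ` Pi\<^sub>E UNIV A" by (metis image_eqI vec_nth_inverse)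
qed auto

lemma
  assumes "\<And>k. finite (A k)"
  shows finite_vec_Pi: "finite {v::'b^'d. \<forall>k. v $ k \<in> A k}"
    and card_vec_Pi: "card {v::'b^'d. \<forall>k. v $ k \<in> A k} = (\<Prod>k\<in>UNIV. card (A k))"
proof -
  have "inj_on vec_lambda (Pi\<^sub>E UNIV A)"
    by (intro inj_onI) (simp add: vec_lambda_inject)
  moreover have "finite (Pi\<^sub>E (UNIV::'d set) A)"
    using assms by (intro finite_PiE) auto
  ultimately show "finite {v::'b^'d. \<forall>k. v $ k \<in> A k}"
    and "card {v::'b^'d. \<forall>k. v $ k \<in> A k} = (\<Prod>k\<in>UNIV. card (A k))"
    unfolding vec_Pi_eq_image by (simp_all add: card_image card_PiE)
qed

lemma Lambda_eq_vec_Pi: "Lambda n = {v::int^'d. \<forall>k. v $ k \<in> {1..int n}}"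
  unfolding Lambda_def by auto

lemma finite_Lambda: "finite (Lambda n)"
  unfolding Lambda_eq_vec_Pi by (rule finite_vec_Pi) simp

lemma real_of_int_le_real_iff: "real_of_int m \<le> real n \<longleftrightarrow> m \<le> int n"
  by (metis of_int_le_iff of_int_of_nat_eq)

lemma grid_pt_in_unit_cube:
  assumes "i \<in> Lambda n"
  shows "grid_pt n i \<in> unit_cube"
proof -
  have i: "1 \<le> i $ k" "i $ k \<le> int n" for k
    using assms unfolding Lambda_def by auto
  have "0 \<le> real_of_int (i $ k)" "real_of_int (i $ k) \<le> real n" for k
    using i[of k] by (simp_all add: real_of_int_le_real_iff)
  then show ?thesis
    unfolding unit_cube_def grid_pt_def by (auto simp: divide_le_eq_1)
qed

lemma consecutive_integers_near:
  fixes t r :: real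
  assumes "0 \<le> t" "t \<le> real n" "1 \<le> r" "r \<le> real n"
  obtains a :: int
  where "{a..<a + \<lfloor>r\<rfloor>} \<subseteq> {m. 1 \<le> m \<and> m \<le> int n \<and> \<bar>t - real_of_int m\<bar> \<le> r}"
proof (cases "t \<le> r")
  case True
  show ?thesis
  proof (rule that[of 1], rule subsetI)
    fix m assume "m \<in> {1..<1 + \<lfloor>r\<rfloor>}"
    then have "1 \<le> m" "real_of_int m \<le> r" by auto linarith
    with True assms show "m \<in> {m. 1 \<le> m \<and> m \<le> int n \<and> \<bar>t - real_of_int m\<bar> \<le> r}"
      by (auto simp flip: real_of_int_le_real_iff)
  qed
next
  case False
  show ?thesis
  proof (rule that[of "\<lceil>t - r\<rceil>"], rule subsetI)
    fix m assume "m \<in> {\<lceil>t - r\<rceil>..<\<lceil>t - r\<rceil> + \<lfloor>r\<rfloor>}"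
    then have "t - r \<le> m" "real_of_int m \<le> t" "0 < m"
      using False by auto linarith+
    with assms show "m \<in> {m. 1 \<le> m \<and> m \<le> int n \<and> \<bar>t - real_of_int m\<bar> \<le> r}"
      by (auto simp flip: real_of_int_le_real_iff)
  qed
qed

text \<open>A box of \<open>\<lfloor>r\<rfloor>\<^sup>d\<close> grid points fits into the sup-norm ball of radius \<open>r/n\<close> around
  any point of the cube, and \<open>\<lfloor>r\<rfloor> \<ge> r/2\<close> for \<open>r \<ge> 1\<close>.\<close>
lemma card_grid_pts_near_ge:
  fixes x :: "real^'d"
  assumes x: "x \<in> unit_cube" and r: "1 \<le> r" "r \<le> real n"
  shows "(r / 2) ^ CARD('d) \<le> card {i \<in> Lambda n. supnorm (x - grid_pt n i) \<le> r / n}"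
    (is "_ \<le> real (card ?A)")
proof -
  have n: "0 < real n" using r by linarith
  have "\<exists>a. {a..<a + \<lfloor>r\<rfloor>} \<subseteq> {m. 1 \<le> m \<and> m \<le> int n \<and> \<bar>real n * x $ k - m\<bar> \<le> r}" for k
  proof -
    have "0 \<le> x $ k" "x $ k \<le> 1" using x unfolding unit_cube_def by auto
    with n have "0 \<le> real n * x $ k" "real n * x $ k \<le> real n"
      by (auto simp: mult_le_cancel_left1)
    from consecutive_integers_near[OF this r] show ?thesis by blast
  qed
  then obtain a where a: "\<And>k. {a k..<a k + \<lfloor>r\<rfloor>} \<subseteq> {m. 1 \<le> m \<and> m \<le> int n \<and> \<bar>real n * x $ k - m\<bar> \<le> r}"
    by metis
  define box where "box = {v::int^'d. \<forall>k. v $ k \<in> {a k..<a k + \<lfloor>r\<rfloor>}}"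
  have "box \<subseteq> ?A"
  proof
    fix v assume "v \<in> box"
    then have v: "1 \<le> v $ k \<and> v $ k \<le> int n \<and> \<bar>real n * x $ k - v $ k\<bar> \<le> r" for k
      using a unfolding box_def by blast
    have "\<bar>x $ k - v $ k / real n\<bar> = \<bar>real n * x $ k - v $ k\<bar> / real n" for k
      using n by (simp add: field_simps)
    with v n have "\<bar>x $ k - v $ k / real n\<bar> \<le> r / real n" for k
      by (simp add: divide_right_mono)
    with v show "v \<in> ?A"
      unfolding Lambda_def by (auto simp: supnorm_le_iff grid_pt_def)
  qed
  moreover have "finite ?A" using finite_Lambda[of n] by (rule rev_finite_subset) auto
  ultimately have "card box \<le> card ?A" by (simp add: card_mono)
  have "card box = nat \<lfloor>r\<rfloor> ^ CARD('d)"
    unfolding box_def by (subst card_vec_Pi) auto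
  have "1 \<le> real_of_int \<lfloor>r\<rfloor>" "real (nat \<lfloor>r\<rfloor>) = real_of_int \<lfloor>r\<rfloor>"
    using r by (simp_all add: le_floor_iff)
  then have "r / 2 \<le> real (nat \<lfloor>r\<rfloor>)"
    using real_of_int_floor_add_one_gt[of r] by linarith
  then have "(r / 2) ^ CARD('d) \<le> real (nat \<lfloor>r\<rfloor>) ^ CARD('d)"
    using r by (intro power_mono) auto
  also have "\<dots> = real (card box)" using \<open>card box = nat \<lfloor>r\<rfloor> ^ CARD('d)\<close> by simp
  also have "\<dots> \<le> real (card ?A)" using \<open>card box \<le> card ?A\<close> by simp
  finally show ?thesis .
qed

lemma stationary_restrict_shift:
  fixes f :: "(int^'d \<Rightarrow> real) \<Rightarrow> real"
  assumes st: "strictly_stationary M \<epsilon>" and meas: "\<And>i. \<epsilon> i \<in> borel_measurable M"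
    and I: "finite I" and f: "f \<in> borel_measurable (PiM I (\<lambda>_. borel))"
  shows "integrable M (\<lambda>\<omega>. f (\<lambda>l\<in>I. \<epsilon> (l + k) \<omega>)) \<longleftrightarrow> integrable M (\<lambda>\<omega>. f (\<lambda>l\<in>I. \<epsilon> l \<omega>))"
    and "integral\<^sup>L M (\<lambda>\<omega>. f (\<lambda>l\<in>I. \<epsilon> (l + k) \<omega>)) = integral\<^sup>L M (\<lambda>\<omega>. f (\<lambda>l\<in>I. \<epsilon> l \<omega>))"
proof -
  have distr_eq: "distr M (PiM I (\<lambda>_. borel)) (\<lambda>\<omega>. \<lambda>l\<in>I. \<epsilon> (l + k) \<omega>)
      = distr M (PiM I (\<lambda>_. borel)) (\<lambda>\<omega>. \<lambda>l\<in>I. \<epsilon> l \<omega>)"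
    using st I unfolding strictly_stationary_def by blast
  have shifted: "(\<lambda>\<omega>. \<lambda>l\<in>I. \<epsilon> (l + k) \<omega>) \<in> M \<rightarrow>\<^sub>M PiM I (\<lambda>_. borel)"
    and unshifted: "(\<lambda>\<omega>. \<lambda>l\<in>I. \<epsilon> l \<omega>) \<in> M \<rightarrow>\<^sub>M PiM I (\<lambda>_. borel)"
    by (intro measurable_restrict meas)+
  show "integrable M (\<lambda>\<omega>. f (\<lambda>l\<in>I. \<epsilon> (l + k) \<omega>)) \<longleftrightarrow> integrable M (\<lambda>\<omega>. f (\<lambda>l\<in>I. \<epsilon> l \<omega>))"
    using integrable_distr_eq[OF shifted f] integrable_distr_eq[OF unshifted f] distr_eq by simp
  show "integral\<^sup>L M (\<lambda>\<omega>. f (\<lambda>l\<in>I. \<epsilon> (l + k) \<omega>)) = integral\<^sup>L M (\<lambda>\<omega>. f (\<lambda>l\<in>I. \<epsilon> l \<omega>))"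
    using integral_distr[OF shifted f] integral_distr[OF unshifted f] distr_eq by simp
qed

lemma stationary_covariance:
  fixes \<epsilon> :: "int^'d \<Rightarrow> 'a \<Rightarrow> real"
  assumes "strictly_stationary M \<epsilon>" "\<And>i. \<epsilon> i \<in> borel_measurable M"
  shows "integral\<^sup>L M (\<lambda>\<omega>. \<epsilon> i \<omega> * \<epsilon> j \<omega>) = integral\<^sup>L M (\<lambda>\<omega>. \<epsilon> 0 \<omega> * \<epsilon> (j - i) \<omega>)"
  using stationary_restrict_shift(2)[OF assms, of "{0, j - i}" "\<lambda>y. y 0 * y (j - i)" i]
  by simp

lemma stationary_square_integrable:
  assumes "strictly_stationary M \<epsilon>" "\<And>i. \<epsilon> i \<in> borel_measurable M"
    and "integrable M (\<lambda>\<omega>. (\<epsilon> 0 \<omega>)\<^sup>2)"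
  shows "integrable M (\<lambda>\<omega>. (\<epsilon> i \<omega>)\<^sup>2)"
  using stationary_restrict_shift(1)[OF assms(1,2), of "{0}" "\<lambda>y. (y 0)\<^sup>2" i] assms(3)
  by simp

lemma integrable_mult_of_square_integrable:
  fixes X Y :: "'a \<Rightarrow> real"
  assumes "X \<in> borel_measurable M" "Y \<in> borel_measurable M"
    and "integrable M (\<lambda>\<omega>. (X \<omega>)\<^sup>2)" "integrable M (\<lambda>\<omega>. (Y \<omega>)\<^sup>2)"
  shows "integrable M (\<lambda>\<omega>. X \<omega> * Y \<omega>)"
proof (rule Bochner_Integration.integrable_bound)
  show "integrable M (\<lambda>\<omega>. (X \<omega>)\<^sup>2 + (Y \<omega>)\<^sup>2)" using assms by simp
  show "(\<lambda>\<omega>. X \<omega> * Y \<omega>) \<in> borel_measurable M" using assms by measurable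
  have "\<bar>X \<omega> * Y \<omega>\<bar> \<le> (X \<omega>)\<^sup>2 + (Y \<omega>)\<^sup>2" for \<omega>
  proof -
    have "2 * \<bar>X \<omega> * Y \<omega>\<bar> \<le> (X \<omega>)\<^sup>2 + (Y \<omega>)\<^sup>2"
      using sum_squares_bound[of "\<bar>X \<omega>\<bar>" "\<bar>Y \<omega>\<bar>"] by (simp add: abs_mult)
    then show ?thesis using abs_ge_zero[of "X \<omega> * Y \<omega>"] by linarith
  qed
  then show "AE \<omega> in M. norm (X \<omega> * Y \<omega>) \<le> norm ((X \<omega>)\<^sup>2 + (Y \<omega>)\<^sup>2)" by simp
qed

lemma stationary_products_integrable:
  assumes "strictly_stationary M \<epsilon>" "\<And>i. \<epsilon> i \<in> borel_measurable M"
    and "integrable M (\<lambda>\<omega>. (\<epsilon> 0 \<omega>)\<^sup>2)"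
  shows "integrable M (\<lambda>\<omega>. \<epsilon> i \<omega> * \<epsilon> j \<omega>)"
  using assms by (intro integrable_mult_of_square_integrable stationary_square_integrable[OF assms])

lemma weighted_mean_dist_le:
  fixes w f :: "'i \<Rightarrow> real"
  assumes w: "sum w I = 1" "\<And>i. i \<in> I \<Longrightarrow> 0 \<le> w i"
    and close: "\<And>i. i \<in> I \<Longrightarrow> w i \<noteq> 0 \<Longrightarrow> \<bar>f i - y\<bar> \<le> \<delta>"
  shows "\<bar>(\<Sum>i\<in>I. w i * f i) - y\<bar> \<le> \<delta>"
proof -
  have "(\<Sum>i\<in>I. w i * f i) - y = (\<Sum>i\<in>I. w i * (f i - y))"
    using w(1) by (simp add: right_diff_distrib sum_subtractf flip: sum_distrib_right)
  also have "\<bar>\<dots>\<bar> \<le> (\<Sum>i\<in>I. w i * \<bar>f i - y\<bar>)"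
    using sum_abs[of "\<lambda>i. w i * (f i - y)" I] w(2) by (simp add: abs_mult)
  also have "\<dots> \<le> (\<Sum>i\<in>I. w i * \<delta>)"
    using w(2) close by (intro sum_mono) (metis mult_left_mono mult_zero_left order_refl)
  also have "\<dots> = \<delta>"
    using w(1) by (simp flip: sum_distrib_right)
  finally show ?thesis .
qed

lemma
  fixes \<epsilon> :: "'i::ab_group_add \<Rightarrow> 'a \<Rightarrow> real"
  assumes I: "finite I"
    and prod: "\<And>i j. integrable M (\<lambda>\<omega>. \<epsilon> i \<omega> * \<epsilon> j \<omega>)"
    and cov: "\<And>i j. integral\<^sup>L M (\<lambda>\<omega>. \<epsilon> i \<omega> * \<epsilon> j \<omega>) = \<gamma> (j - i)"
    and summable: "(\<lambda>k. \<bar>\<gamma> k\<bar>) summable_on UNIV"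
    and w: "\<And>i. i \<in> I \<Longrightarrow> 0 \<le> w i" "\<And>i. i \<in> I \<Longrightarrow> w i \<le> m"
  shows integrable_weighted_sum_square: "integrable M (\<lambda>\<omega>. (\<Sum>i\<in>I. w i * \<epsilon> i \<omega>)\<^sup>2)"
    and weighted_sum_second_moment_le:
      "integral\<^sup>L M (\<lambda>\<omega>. (\<Sum>i\<in>I. w i * \<epsilon> i \<omega>)\<^sup>2) \<le> m * sum w I * (\<Sum>\<^sub>\<infinity>k. \<bar>\<gamma> k\<bar>)"
proof -
  define \<Gamma> where "\<Gamma> = (\<Sum>\<^sub>\<infinity>k. \<bar>\<gamma> k\<bar>)"
  have square: "(\<Sum>i\<in>I. w i * \<epsilon> i \<omega>)\<^sup>2 = (\<Sum>i\<in>I. \<Sum>j\<in>I. w i * w j * (\<epsilon> i \<omega> * \<epsilon> j \<omega>))" for \<omega>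
    unfolding power2_eq_square sum_product by (simp add: mult_ac)
  show "integrable M (\<lambda>\<omega>. (\<Sum>i\<in>I. w i * \<epsilon> i \<omega>)\<^sup>2)"
    unfolding square by (intro Bochner_Integration.integrable_sum integrable_mult_right prod)
  have row_sum: "(\<Sum>j\<in>I. \<bar>\<gamma> (j - i)\<bar>) \<le> \<Gamma>" for i
  proof -
    have "(\<Sum>j\<in>I. \<bar>\<gamma> (j - i)\<bar>) = (\<Sum>k\<in>(\<lambda>j. j - i) ` I. \<bar>\<gamma> k\<bar>)"
      by (simp add: sum.reindex inj_on_def)
    also have "\<dots> \<le> \<Gamma>"
      unfolding \<Gamma>_def using I by (intro finite_sum_le_infsum[OF summable]) auto
    finally show ?thesis .
  qed
  have "integral\<^sup>L M (\<lambda>\<omega>. (\<Sum>i\<in>I. w i * \<epsilon> i \<omega>)\<^sup>2) = (\<Sum>i\<in>I. \<Sum>j\<in>I. w i * w j * \<gamma> (j - i))"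
    unfolding square
    by (simp add: Bochner_Integration.integral_sum Bochner_Integration.integrable_sum prod cov)
  also have "\<dots> \<le> (\<Sum>i\<in>I. w i * (m * \<Gamma>))"
  proof (rule sum_mono)
    fix i assume i: "i \<in> I"
    have "(\<Sum>j\<in>I. w i * w j * \<gamma> (j - i)) \<le> (\<Sum>j\<in>I. w i * m * \<bar>\<gamma> (j - i)\<bar>)"
    proof (rule sum_mono)
      fix j assume j: "j \<in> I"
      have "w i * w j * \<gamma> (j - i) \<le> w i * w j * \<bar>\<gamma> (j - i)\<bar>"
        using w(1) i j by (intro mult_left_mono) auto
      also have "\<dots> \<le> w i * m * \<bar>\<gamma> (j - i)\<bar>"
        using w i j by (intro mult_right_mono mult_left_mono) auto
      finally show "w i * w j * \<gamma> (j - i) \<le> w i * m * \<bar>\<gamma> (j - i)\<bar>" .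
    qed
    also have "\<dots> = w i * m * (\<Sum>j\<in>I. \<bar>\<gamma> (j - i)\<bar>)"
      by (simp add: sum_distrib_left)
    also have "\<dots> \<le> w i * m * \<Gamma>"
      using w i row_sum by (intro mult_left_mono mult_nonneg_nonneg) (auto intro: order_trans)
    finally show "(\<Sum>j\<in>I. w i * w j * \<gamma> (j - i)) \<le> w i * (m * \<Gamma>)"
      by (simp add: mult_ac)
  qed
  also have "\<dots> = m * sum w I * \<Gamma>"
    by (simp add: mult.commute flip: sum_distrib_right)
  finally show "integral\<^sup>L M (\<lambda>\<omega>. (\<Sum>i\<in>I. w i * \<epsilon> i \<omega>)\<^sup>2) \<le> m * sum w I * (\<Sum>\<^sub>\<infinity>k. \<bar>\<gamma> k\<bar>)"
    unfolding \<Gamma>_def .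
qed

lemma (in prob_space) nn_integral_SUP_square_le:
  assumes S: "integrable M (\<lambda>\<omega>. (S \<omega>)\<^sup>2)" and a: "0 \<le> a"
    and bound: "\<And>g \<omega>. g \<in> G \<Longrightarrow> \<bar>F g \<omega>\<bar> \<le> a + \<bar>S \<omega>\<bar>"
  shows "(\<integral>\<^sup>+\<omega>. (SUP g\<in>G. ennreal \<bar>F g \<omega>\<bar>)\<^sup>2 \<partial>M)
    \<le> ennreal (2 * a\<^sup>2 + 2 * expectation (\<lambda>\<omega>. (S \<omega>)\<^sup>2))"
proof -
  have "(SUP g\<in>G. ennreal \<bar>F g \<omega>\<bar>)\<^sup>2 \<le> ennreal (2 * a\<^sup>2 + 2 * (S \<omega>)\<^sup>2)" for \<omega>
  proof -
    have "(SUP g\<in>G. ennreal \<bar>F g \<omega>\<bar>) \<le> ennreal (a + \<bar>S \<omega>\<bar>)"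
      by (rule SUP_least) (simp add: ennreal_leI bound)
    then have "(SUP g\<in>G. ennreal \<bar>F g \<omega>\<bar>)\<^sup>2 \<le> ennreal ((a + \<bar>S \<omega>\<bar>)\<^sup>2)"
      using a by (simp add: power_mono flip: ennreal_power)
    also have "(a + \<bar>S \<omega>\<bar>)\<^sup>2 \<le> 2 * a\<^sup>2 + 2 * (S \<omega>)\<^sup>2"
      using sum_squares_bound[of a "\<bar>S \<omega>\<bar>"] by (simp add: power2_sum)
    finally show ?thesis by (simp add: ennreal_leI)
  qed
  then have "(\<integral>\<^sup>+\<omega>. (SUP g\<in>G. ennreal \<bar>F g \<omega>\<bar>)\<^sup>2 \<partial>M)
      \<le> (\<integral>\<^sup>+\<omega>. ennreal (2 * a\<^sup>2 + 2 * (S \<omega>)\<^sup>2) \<partial>M)"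
    by (rule nn_integral_mono)
  also have "\<dots> = ennreal (expectation (\<lambda>\<omega>. 2 * a\<^sup>2 + 2 * (S \<omega>)\<^sup>2))"
    using S by (intro nn_integral_eq_integral) auto
  also have "expectation (\<lambda>\<omega>. 2 * a\<^sup>2 + 2 * (S \<omega>)\<^sup>2) = 2 * a\<^sup>2 + 2 * expectation (\<lambda>\<omega>. (S \<omega>)\<^sup>2)"
    using S by (simp add: prob_space)
  finally show ?thesis .
qed

lemma (in prob_space) local_average_risk_le:
  fixes p :: "'i::ab_group_add \<Rightarrow> real^'d" and \<epsilon> :: "'i \<Rightarrow> 'a \<Rightarrow> real"
  assumes I: "finite I" and p: "\<And>i. i \<in> I \<Longrightarrow> p i \<in> unit_cube" and x: "x \<in> unit_cube"
    and w: "sum w I = 1" "\<And>i. i \<in> I \<Longrightarrow> 0 \<le> w i" "\<And>i. i \<in> I \<Longrightarrow> w i \<le> m"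
    and near: "\<And>i. i \<in> I \<Longrightarrow> w i \<noteq> 0 \<Longrightarrow> supnorm (x - p i) \<le> b"
    and "0 \<le> B" "0 \<le> b"
    and prod: "\<And>i j. integrable M (\<lambda>\<omega>. \<epsilon> i \<omega> * \<epsilon> j \<omega>)"
    and cov: "\<And>i j. expectation (\<lambda>\<omega>. \<epsilon> i \<omega> * \<epsilon> j \<omega>) = \<gamma> (j - i)"
    and summable: "(\<lambda>k. \<bar>\<gamma> k\<bar>) summable_on UNIV"
  shows "(\<integral>\<^sup>+\<omega>. (SUP g\<in>Lip B. ennreal \<bar>(\<Sum>i\<in>I. w i * (g (p i) + \<epsilon> i \<omega>)) - g x\<bar>)\<^sup>2 \<partial>M)
    \<le> ennreal (2 * (B * b)\<^sup>2 + 2 * m * (\<Sum>\<^sub>\<infinity>k. \<bar>\<gamma> k\<bar>))"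
proof -
  define S where "S \<omega> = (\<Sum>i\<in>I. w i * \<epsilon> i \<omega>)" for \<omega>
  have error: "\<bar>(\<Sum>i\<in>I. w i * (g (p i) + \<epsilon> i \<omega>)) - g x\<bar> \<le> B * b + \<bar>S \<omega>\<bar>"
    if g: "g \<in> Lip B" for g \<omega>
  proof -
    have "\<bar>g (p i) - g x\<bar> \<le> B * b" if "i \<in> I" "w i \<noteq> 0" for i
    proof -
      have "\<bar>g x - g (p i)\<bar> \<le> B * supnorm (x - p i)"
        using g x p \<open>i \<in> I\<close> unfolding Lip_def by blast
      also have "\<dots> \<le> B * b"
        using near that \<open>0 \<le> B\<close> by (simp add: mult_left_mono)
      finally show ?thesis by simp
    qed
    then have "\<bar>(\<Sum>i\<in>I. w i * g (p i)) - g x\<bar> \<le> B * b"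
      using weighted_mean_dist_le[OF w(1,2), where f = "\<lambda>i. g (p i)" and y = "g x" and \<delta> = "B * b"]
      by blast
    moreover have "(\<Sum>i\<in>I. w i * (g (p i) + \<epsilon> i \<omega>)) - g x = ((\<Sum>i\<in>I. w i * g (p i)) - g x) + S \<omega>"
      unfolding S_def by (simp add: distrib_left sum.distrib)
    ultimately show ?thesis by linarith
  qed
  have "(\<integral>\<^sup>+\<omega>. (SUP g\<in>Lip B. ennreal \<bar>(\<Sum>i\<in>I. w i * (g (p i) + \<epsilon> i \<omega>)) - g x\<bar>)\<^sup>2 \<partial>M)
      \<le> ennreal (2 * (B * b)\<^sup>2 + 2 * expectation (\<lambda>\<omega>. (S \<omega>)\<^sup>2))"
    using \<open>0 \<le> B\<close> \<open>0 \<le> b\<close> error unfolding S_def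
    by (intro nn_integral_SUP_square_le integrable_weighted_sum_square[OF I prod cov summable, where w = w, OF w(2,3)])
      auto
  also have "expectation (\<lambda>\<omega>. (S \<omega>)\<^sup>2) \<le> m * (\<Sum>\<^sub>\<infinity>k. \<bar>\<gamma> k\<bar>)"
    using weighted_sum_second_moment_le[OF I prod cov summable, where w = w, OF w(2,3)] w(1)
    unfolding S_def by simp
  finally show ?thesis by (simp add: ennreal_leI mult.assoc)
qed

lemma bandwidth_powr:
  fixes d :: nat
  assumes n: "1 \<le> n"
  defines "b \<equiv> real n powr (- real d / (2 + real d))"
  shows "0 < b" and "1 \<le> real n * b" and "real n * b \<le> real n" and "1 / (real n * b) ^ d = b\<^sup>2"
proof -
  have n0: "0 < real n" using n by simp
  show "0 < b" unfolding b_def using n0 by simp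
  have "1 + - real d / (2 + real d) = 2 / (2 + real d)" by (simp add: field_simps)
  then have nb: "real n * b = real n powr (2 / (2 + real d))"
    unfolding b_def using n0 by (metis powr_add powr_one of_nat_0_le_iff)
  show "1 \<le> real n * b" unfolding nb using n by (intro ge_one_powr_ge_zero) auto
  show "real n * b \<le> real n"
    unfolding nb using n powr_mono[of "2 / (2 + real d)" 1 "real n"] by simp
  have "(real n * b) ^ d = real n powr (real d * (2 / (2 + real d)))"
    unfolding nb by (rule powr_power) (use n0 in simp)
  then have "1 / (real n * b) ^ d = real n powr (- (real d * (2 / (2 + real d))))"
    by (simp add: powr_minus_divide)
  also have "- (real d * (2 / (2 + real d))) = real 2 * (- real d / (2 + real d))"
    by (simp add: field_simps)
  also have "real n powr (real 2 * (- real d / (2 + real d))) = b\<^sup>2"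
    unfolding b_def by (rule powr_power[symmetric]) (use n0 in simp)
  finally show "1 / (real n * b) ^ d = b\<^sup>2" .
qed

lemma supnorm_scaleR_inverse_le_1_iff:
  assumes "0 < b"
  shows "supnorm ((1 / b) *\<^sub>R v) \<le> 1 \<longleftrightarrow> supnorm (v::real^'d) \<le> b"
  using assms by (simp add: supnorm_le_iff abs_mult divide_le_eq_1 field_simps)

locale box_kernel =
  fixes K :: "real^'d \<Rightarrow> real" and c C :: real
  assumes nonneg: "0 \<le> K y"
    and vanishes: "1 < supnorm y \<Longrightarrow> K y = 0"
    and lower: "supnorm y \<le> 1 \<Longrightarrow> c \<le> K y"
    and upper: "K y \<le> C"
    and c_pos: "0 < c"

lemma kernel_A1_imp_box_kernel:
  assumes "kernel_A1 K"
  obtains c C where "box_kernel K c C"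
proof -
  obtain c C where "0 < c" "0 < C" and bounds: "\<And>y. supnorm y \<le> 1 \<Longrightarrow> c \<le> K y \<and> K y \<le> C"
    using assms unfolding kernel_A1_def by blast
  have vanishes: "1 < supnorm y \<Longrightarrow> K y = 0" and "0 \<le> K y" for y
    using assms unfolding kernel_A1_def by blast+
  moreover have "K y \<le> C" for y
    using bounds[of y] vanishes[of y] \<open>0 < C\<close> by (cases "supnorm y \<le> 1") auto
  ultimately have "box_kernel K c C"
    using \<open>0 < c\<close> bounds unfolding box_kernel_def by blast
  then show ?thesis by (rule that)
qed

definition kernel_weight :: "(real^'d \<Rightarrow> real) \<Rightarrow> real \<Rightarrow> nat \<Rightarrow> real^'d \<Rightarrow> int^'d \<Rightarrow> real" where
  "kernel_weight K b n x i =
     K ((1 / b) *\<^sub>R (x - grid_pt n i)) / (\<Sum>j\<in>Lambda n. K ((1 / b) *\<^sub>R (x - grid_pt n j)))"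

lemma g_est_eq_kernel_weighted:
  "g_est K h \<epsilon> g n x \<omega> =
     (\<Sum>i\<in>Lambda n. kernel_weight K (h n) n x i * (g (grid_pt n i) + \<epsilon> i \<omega>))"
  unfolding g_est_def kernel_weight_def by (simp add: sum_divide_distrib mult.commute)

context box_kernel
begin

lemma kernel_sum_ge:
  assumes x: "x \<in> unit_cube" and b: "0 < b" "1 \<le> real n * b" "real n * b \<le> real n"
  shows "c * (real n * b / 2) ^ CARD('d) \<le> (\<Sum>i\<in>Lambda n. K ((1 / b) *\<^sub>R (x - grid_pt n i)))"
proof -
  define A where "A = {i \<in> Lambda n. supnorm (x - grid_pt n i) \<le> real n * b / real n}"
  have "real n * b / real n = b" using b by simp
  then have near: "c \<le> K ((1 / b) *\<^sub>R (x - grid_pt n i))" if "i \<in> A" for i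
    using that b(1) unfolding A_def by (auto intro: lower simp: supnorm_scaleR_inverse_le_1_iff)
  have "c * (real n * b / 2) ^ CARD('d) \<le> c * real (card A)"
    unfolding A_def using card_grid_pts_near_ge[OF x b(2,3)] c_pos by simp
  also have "\<dots> = (\<Sum>i\<in>A. c)" by simp
  also have "\<dots> \<le> (\<Sum>i\<in>A. K ((1 / b) *\<^sub>R (x - grid_pt n i)))"
    by (rule sum_mono) (rule near)
  also have "\<dots> \<le> (\<Sum>i\<in>Lambda n. K ((1 / b) *\<^sub>R (x - grid_pt n i)))"
    unfolding A_def using finite_Lambda nonneg by (intro sum_mono2) auto
  finally show ?thesis .
qed

lemma kernel_sum_pos:
  assumes "x \<in> unit_cube" "0 < b" "1 \<le> real n * b" "real n * b \<le> real n"
  shows "0 < (\<Sum>i\<in>Lambda n. K ((1 / b) *\<^sub>R (x - grid_pt n i)))"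
proof -
  have "0 < c * (real n * b / 2) ^ CARD('d)"
    using c_pos assms(3) by simp
  then show ?thesis
    using kernel_sum_ge[OF assms] by linarith
qed

lemma kernel_weight_nonneg: "0 \<le> kernel_weight K b n x i"
  unfolding kernel_weight_def by (simp add: nonneg sum_nonneg)

lemma sum_kernel_weight:
  assumes "x \<in> unit_cube" "0 < b" "1 \<le> real n * b" "real n * b \<le> real n"
  shows "(\<Sum>i\<in>Lambda n. kernel_weight K b n x i) = 1"
  using kernel_sum_pos[OF assms] unfolding kernel_weight_def
  by (simp flip: sum_divide_distrib)

lemma kernel_weight_nonzero_imp_near:
  assumes "0 < b" "kernel_weight K b n x i \<noteq> 0"
  shows "supnorm (x - grid_pt n i) \<le> b"
proof (rule ccontr)
  assume "\<not> supnorm (x - grid_pt n i) \<le> b"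
  then have "1 < supnorm ((1 / b) *\<^sub>R (x - grid_pt n i))"
    using supnorm_scaleR_inverse_le_1_iff[OF assms(1)] unfolding not_le[symmetric] by blast
  then show False
    using assms(2) vanishes unfolding kernel_weight_def by simp
qed

lemma kernel_weight_le:
  assumes "x \<in> unit_cube" "0 < b" "1 \<le> real n * b" "real n * b \<le> real n"
  shows "kernel_weight K b n x i \<le> C * 2 ^ CARD('d) / (c * (real n * b) ^ CARD('d))"
proof -
  have "kernel_weight K b n x i \<le> C / (\<Sum>j\<in>Lambda n. K ((1 / b) *\<^sub>R (x - grid_pt n j)))"
    unfolding kernel_weight_def using kernel_sum_pos[OF assms] upper by (simp add: divide_right_mono)
  also have "\<dots> \<le> C / (c * (real n * b / 2) ^ CARD('d))"
    using kernel_sum_ge[OF assms] kernel_sum_pos[OF assms] c_pos assms(3) upper[of 0] nonneg[of 0]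
    by (intro divide_left_mono mult_pos_pos) auto
  also have "\<dots> = C * 2 ^ CARD('d) / (c * (real n * b) ^ CARD('d))"
    by (simp add: power_divide)
  finally show ?thesis .
qed

lemma kernel_estimator_risk_le:
  fixes \<epsilon> :: "int^'d \<Rightarrow> 'a \<Rightarrow> real"
  assumes M: "prob_space M" and x: "x \<in> unit_cube" and n: "1 \<le> n"
    and b: "b = real n powr (- real CARD('d) / (2 + real CARD('d)))" and "0 \<le> B"
    and prod: "\<And>i j. integrable M (\<lambda>\<omega>. \<epsilon> i \<omega> * \<epsilon> j \<omega>)"
    and cov: "\<And>i j. integral\<^sup>L M (\<lambda>\<omega>. \<epsilon> i \<omega> * \<epsilon> j \<omega>) = \<gamma> (j - i)"
    and summable: "(\<lambda>k. \<bar>\<gamma> k\<bar>) summable_on UNIV"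
  shows "(\<integral>\<^sup>+\<omega>. (SUP g\<in>Lip B. ennreal
      \<bar>(\<Sum>i\<in>Lambda n. kernel_weight K b n x i * (g (grid_pt n i) + \<epsilon> i \<omega>)) - g x\<bar>)\<^sup>2 \<partial>M)
    \<le> ennreal ((2 * B\<^sup>2 + 2 * C * 2 ^ CARD('d) * (\<Sum>\<^sub>\<infinity>k. \<bar>\<gamma> k\<bar>) / c) * b\<^sup>2)"
proof -
  note bw = bandwidth_powr[OF n, of "CARD('d)", folded b]
  have "(\<integral>\<^sup>+\<omega>. (SUP g\<in>Lip B. ennreal
      \<bar>(\<Sum>i\<in>Lambda n. kernel_weight K b n x i * (g (grid_pt n i) + \<epsilon> i \<omega>)) - g x\<bar>)\<^sup>2 \<partial>M)
    \<le> ennreal (2 * (B * b)\<^sup>2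
        + 2 * (C * 2 ^ CARD('d) / (c * (real n * b) ^ CARD('d))) * (\<Sum>\<^sub>\<infinity>k. \<bar>\<gamma> k\<bar>))"
  proof (rule prob_space.local_average_risk_le[OF M])
  qed (simp_all add: finite_Lambda grid_pt_in_unit_cube x sum_kernel_weight[OF x bw(1-3)]
      kernel_weight_nonneg kernel_weight_le[OF x bw(1-3)] kernel_weight_nonzero_imp_near[OF bw(1)]
      \<open>0 \<le> B\<close> less_imp_le[OF bw(1)] prod cov summable)
  also have "C * 2 ^ CARD('d) / (c * (real n * b) ^ CARD('d)) = C * 2 ^ CARD('d) / c * b\<^sup>2"
    by (simp flip: bw(4))
  finally show ?thesis
    by (simp add: algebra_simps power_mult_distrib)
qed

end

theorem corollary2:
  fixes M :: "'a measure" and \<epsilon> :: "int^'d \<Rightarrow> 'a \<Rightarrow> real"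
    and K :: "real^'d \<Rightarrow> real" and B :: real and h :: "nat \<Rightarrow> real"
  assumes "prob_space M"
    and "\<And>i. \<epsilon> i \<in> borel_measurable M"
    and "strictly_stationary M \<epsilon>"
    and "integrable M (\<epsilon> 0)" and "integral\<^sup>L M (\<epsilon> 0) = 0"
    and "kernel_A1 K"
    and "B > 0"
    and "cond_C4 M \<epsilon>"
    and "\<And>n. h n = real n powr (- real CARD('d) / (2 + real CARD('d)))"
  shows "\<exists>C N. \<forall>n\<ge>N.
     (SUP x\<in>unit_cube.
        (\<integral>\<^sup>+ \<omega>. (SUP g\<in>Lip B. ennreal \<bar>g_est K h \<epsilon> g n x \<omega> - g x\<bar>)\<^sup>2 \<partial>M))
     \<le> ennreal ((C * real n powr (- real CARD('d) / (2 + real CARD('d))))\<^sup>2)"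
proof -
  interpret prob_space M by fact
  obtain c C where K: "box_kernel K c C"
    using kernel_A1_imp_box_kernel[OF assms(6)] .
  define \<gamma> where "\<gamma> k = expectation (\<lambda>\<omega>. \<epsilon> 0 \<omega> * \<epsilon> k \<omega>)" for k
  define \<kappa> where "\<kappa> = 2 * B\<^sup>2 + 2 * C * 2 ^ CARD('d) * (\<Sum>\<^sub>\<infinity>k. \<bar>\<gamma> k\<bar>) / c"
  have C4: "integrable M (\<lambda>\<omega>. (\<epsilon> 0 \<omega>)\<^sup>2)" "(\<lambda>k. \<bar>\<gamma> k\<bar>) summable_on UNIV"
    using assms(8) unfolding cond_C4_def \<gamma>_def by auto
  have cov: "expectation (\<lambda>\<omega>. \<epsilon> i \<omega> * \<epsilon> j \<omega>) = \<gamma> (j - i)" for i j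
    unfolding \<gamma>_def using assms(3,2) by (rule stationary_covariance)
  have "0 \<le> \<kappa>"
    using box_kernel.c_pos[OF K] box_kernel.nonneg[OF K, of 0] box_kernel.upper[OF K, of 0]
      infsum_nonneg[of UNIV "\<lambda>k. \<bar>\<gamma> k\<bar>"]
    unfolding \<kappa>_def by (intro add_nonneg_nonneg divide_nonneg_pos mult_nonneg_nonneg) auto
  have "(\<integral>\<^sup>+ \<omega>. (SUP g\<in>Lip B. ennreal \<bar>g_est K h \<epsilon> g n x \<omega> - g x\<bar>)\<^sup>2 \<partial>M) \<le> ennreal ((sqrt \<kappa> * h n)\<^sup>2)"
    if "x \<in> unit_cube" "1 \<le> n" for n x
    unfolding g_est_eq_kernel_weighted power_mult_distrib real_sqrt_pow2[OF \<open>0 \<le> \<kappa>\<close>]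
    unfolding \<kappa>_def
    using assms(7) by (intro box_kernel.kernel_estimator_risk_le[OF K assms(1) that assms(9)]
        stationary_products_integrable[OF assms(3,2) C4(1)] cov C4(2)) simp
  then show ?thesis
    unfolding assms(9) by (intro exI[of _ "sqrt \<kappa>"] exI[of _ 1] allI impI SUP_least) auto
qed

end
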